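(* For every integer $n\ge 2$, the configuration $\mathit{DCD}(n)$ is isomorphic (as a combinatorial incidence structure) to the combinatorial configuration $N(O_n)$ obtained by the $V$-construction from the Odd graph $O_n$.
   Context: $\mathit{DCD}(n)$ (Desargues–Cayley–Danzer configuration): take $2n-1$ hyperplanes in general position (no more than $n$ of them through a common point) in $n$-dimensional projective space. Each $n$ of them meet in a point and each $n-1$ of them meet in a line; the points and lines are thus labelled by the $n$-element and the $(n-1)$-element subsets of a $(2n-1)$-element set, and a point is incident with a line iff the label of the line is contained in the label of the point. As a combinatorial incidence structure, $\mathit{DCD}(n)$ has as points the $n$-subsets and as lines the $(n-1)$-subsets of $\{1,\dots,2n-1\}$, with incidence given by containment. The Odd graph $O_n$ is the Kneser graph $K(2n-1,n-1)$: its vertices are the $(n-1)$-subsets of a $(2n-1)$-element set, two being adjacent iff they are disjoint. $V$-construction: for a regular graph $G$, let $N(v)$ denote the set of neighbours of a vertex $v$. $G$ is admissible if no two distinct vertices have the same neighbourhood. For admissible $G$, $N(G)$ is the incidence structure whose points are the vertices of $G$, whose blocks are the sets $N(v)$, $v\in V(G)$, and with incidence given by membership. Two incidence structures are isomorphic if there are bijections between their point sets and between their block sets preserving incidence. *)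

theory Defs
  imports Main
begin

type_synonym ('p, 'b) incidence_structure = "'p set \<times> 'b set \<times> ('p \<Rightarrow> 'b \<Rightarrow> bool)"

definition inc_points :: "('p, 'b) incidence_structure \<Rightarrow> 'p set" where
  "inc_points S = fst S"
definition inc_blocks :: "('p, 'b) incidence_structure \<Rightarrow> 'b set" where
  "inc_blocks S = fst (snd S)"
definition inc_rel :: "('p, 'b) incidence_structure \<Rightarrow> 'p \<Rightarrow> 'b \<Rightarrow> bool" where
  "inc_rel S = snd (snd S)"

definition inc_iso ::
  "('p, 'b) incidence_structure \<Rightarrow> ('q, 'c) incidence_structure \<Rightarrow> bool" where
  "inc_iso S T \<longleftrightarrow> (\<exists>f g. bij_betw f (inc_points S) (inc_points T)
      \<and> bij_betw g (inc_blocks S) (inc_blocks T)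
      \<and> (\<forall>p\<in>inc_points S. \<forall>b\<in>inc_blocks S. inc_rel S p b \<longleftrightarrow> inc_rel T (f p) (g b)))"

definition DCD :: "nat \<Rightarrow> (nat set, nat set) incidence_structure" where
  "DCD n = ({P. P \<subseteq> {1..2*n-1} \<and> card P = n},
            {L. L \<subseteq> {1..2*n-1} \<and> card L = n - 1},
            (\<lambda>P L. L \<subseteq> P))"

type_synonym 'a graph = "'a set \<times> ('a \<Rightarrow> 'a \<Rightarrow> bool)"

definition gverts :: "'a graph \<Rightarrow> 'a set" where "gverts G = fst G"
definition gadj :: "'a graph \<Rightarrow> 'a \<Rightarrow> 'a \<Rightarrow> bool" where "gadj G = snd G"

definition nbhd :: "'a graph \<Rightarrow> 'a \<Rightarrow> 'a set" where
  "nbhd G v = {u \<in> gverts G. gadj G v u}"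

definition admissible :: "'a graph \<Rightarrow> bool" where
  "admissible G \<longleftrightarrow> inj_on (nbhd G) (gverts G)"

definition V_construction :: "'a graph \<Rightarrow> ('a, 'a set) incidence_structure" where
  "V_construction G = (gverts G, nbhd G ` gverts G, (\<lambda>p b. p \<in> b))"

definition odd_graph :: "nat \<Rightarrow> nat set graph" where
  "odd_graph n = ({A. A \<subseteq> {1..2*n-1} \<and> card A = n - 1},
                  (\<lambda>A B. A \<inter> B = {}))"

end

theory Submission
  imports Defs
begin

text \<open>Complementation in the ground set maps the points of DCD(n) onto the vertices of
  the Odd graph, and a line L lies in a point P exactly when L is disjoint from the
  complement of P, i.e. adjacent to it in O_n. Since O_n is admissible, each vertex L is
  recovered from its neighbourhood, so lines correspond to blocks N(L).\<close>

definition kneser_graph :: "'a set \<Rightarrow> nat \<Rightarrow> 'a set graph" where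
  "kneser_graph U k = ({A. A \<subseteq> U \<and> card A = k}, (\<lambda>A B. A \<inter> B = {}))"

lemma odd_graph_eq_kneser_graph: "odd_graph n = kneser_graph {1..2*n-1} (n - 1)"
  by (simp add: odd_graph_def kneser_graph_def)

lemma bij_betw_complement_card:
  assumes "finite U" "k \<le> card U"
  shows "bij_betw (\<lambda>A. U - A) {A. A \<subseteq> U \<and> card A = k}
           {A. A \<subseteq> U \<and> card A = card U - k}"
proof (rule bij_betw_byWitness[where f' = "\<lambda>A. U - A"])
  have card_compl: "card (U - A) = card U - card A" if "A \<subseteq> U" for A
    using that assms(1) finite_subset card_Diff_subset by blast
  show "(\<lambda>A. U - A) ` {A. A \<subseteq> U \<and> card A = k} \<subseteq> {A. A \<subseteq> U \<and> card A = card U - k}"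
    using card_compl by auto
  show "(\<lambda>A. U - A) ` {A. A \<subseteq> U \<and> card A = card U - k} \<subseteq> {A. A \<subseteq> U \<and> card A = k}"
    using card_compl assms(2) by (auto simp: double_diff)
qed auto

lemma admissible_kneser_graph:
  assumes "finite U" "1 \<le> k" "2 * k < card U"
  shows "admissible (kneser_graph U k)"
  unfolding admissible_def
proof (rule inj_onI, rule ccontr)
  let ?G = "kneser_graph U k"
  fix A B
  assume A: "A \<in> gverts ?G" and B: "B \<in> gverts ?G"
    and same_nbhd: "nbhd ?G A = nbhd ?G B" and "A \<noteq> B"
  have "A \<subseteq> U" "B \<subseteq> U" "card A = k" "card B = k"
    using A B by (auto simp: kneser_graph_def gverts_def)
  then have "\<not> A \<subseteq> B"
    using \<open>A \<noteq> B\<close> assms(1) finite_subset card_subset_eq by metis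
  then obtain x where "x \<in> A" "x \<notin> B" by blast
  have "card (U - B) = card U - k"
    using \<open>B \<subseteq> U\<close> \<open>card B = k\<close> assms(1) by (simp add: card_Diff_subset finite_subset)
  moreover have "x \<in> U - B"
    using \<open>x \<in> A\<close> \<open>x \<notin> B\<close> \<open>A \<subseteq> U\<close> by blast
  ultimately have "card (U - B - {x}) = card U - k - 1"
    by simp
  then have "k - 1 \<le> card (U - B - {x})"
    using assms(3) by linarith
  then obtain D where D: "D \<subseteq> U - B - {x}" "card D = k - 1" "finite D"
    by (rule obtain_subset_with_card_n)
  \<comment> \<open>a \<open>k\<close>-set disjoint from \<open>B\<close> but meeting \<open>A\<close>; it exists because \<open>2k < |U|\<close>\<close>
  define C where "C = insert x D"
  have "x \<notin> D"
    using D(1) by blast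
  have "C \<subseteq> U" "card C = k" "C \<inter> B = {}"
    using D \<open>x \<notin> D\<close> \<open>x \<in> A\<close> \<open>A \<subseteq> U\<close> \<open>x \<notin> B\<close> assms(2) by (auto simp: C_def)
  then have "C \<in> nbhd ?G B"
    by (auto simp: nbhd_def kneser_graph_def gverts_def gadj_def)
  moreover have "C \<notin> nbhd ?G A"
    using \<open>x \<in> A\<close> by (auto simp: C_def nbhd_def kneser_graph_def gadj_def)
  ultimately show False
    using same_nbhd by simp
qed

lemma inc_iso_V_construction:
  assumes "admissible G"
    and "bij_betw f P (gverts G)" and "bij_betw h B (gverts G)"
    and "\<And>p b. p \<in> P \<Longrightarrow> b \<in> B \<Longrightarrow> I p b \<longleftrightarrow> gadj G (h b) (f p)"
  shows "inc_iso (P, B, I) (V_construction G)"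
proof -
  have "bij_betw (nbhd G) (gverts G) (nbhd G ` gverts G)"
    using assms(1) by (simp add: admissible_def inj_on_imp_bij_betw)
  then have "bij_betw (nbhd G \<circ> h) B (nbhd G ` gverts G)"
    using assms(3) bij_betw_trans by blast
  moreover have "I p b \<longleftrightarrow> f p \<in> (nbhd G \<circ> h) b" if "p \<in> P" "b \<in> B" for p b
    using that assms(2,4) bij_betwE by (fastforce simp: nbhd_def)
  ultimately show ?thesis
    using assms(2)
    unfolding inc_iso_def V_construction_def inc_points_def inc_blocks_def inc_rel_def
    by (intro exI[of _ f] exI[of _ "nbhd G \<circ> h"]) auto
qed

theorem theorem3p4:
  fixes n :: nat
  assumes "n \<ge> 2"
  shows "inc_iso (DCD n) (V_construction (odd_graph n))"
proof -
  let ?U = "{1..2*n-1::nat}"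
  let ?G = "kneser_graph ?U (n - 1)"
  have "admissible ?G"
    using assms by (intro admissible_kneser_graph) auto
  moreover have "bij_betw (\<lambda>P. ?U - P) {P. P \<subseteq> ?U \<and> card P = n} (gverts ?G)"
    using bij_betw_complement_card[of ?U n] assms
    by (simp add: kneser_graph_def gverts_def)
  moreover have "bij_betw id {L. L \<subseteq> ?U \<and> card L = n - 1} (gverts ?G)"
    by (simp add: kneser_graph_def gverts_def bij_betw_id)
  moreover have "L \<subseteq> P \<longleftrightarrow> gadj ?G (id L) (?U - P)"
    if "P \<in> {P. P \<subseteq> ?U \<and> card P = n}" "L \<in> {L. L \<subseteq> ?U \<and> card L = n - 1}" for P L
    using that by (auto simp: kneser_graph_def gadj_def)
  ultimately have "inc_iso (DCD n) (V_construction ?G)"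
    unfolding DCD_def by (rule inc_iso_V_construction)
  then show ?thesis
    by (simp add: odd_graph_eq_kneser_graph)
qed

end
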